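(* Let $a$ be a complex number of modulus one and let $H$ be a $6\times 6$ complex Hadamard matrix all of whose entries lie in $\{1,a,\bar a\}$. Then $H$ is complex equivalent to the Tao matrix $S_6^{(0)}$ or to the matrix $H^{(1)}$, where, with $\omega=e^{2\pi i/3}$, $$S_6^{(0)}=\begin{bmatrix} 1&1&1&1&1&1\\ 1&1&\omega&\omega&\omega^2&\omega^2\\ 1&\omega&1&\omega^2&\omega^2&\omega\\ 1&\omega&\omega^2&1&\omega&\omega^2\\ 1&\omega^2&\omega^2&\omega&1&\omega\\ 1&\omega^2&\omega&\omega^2&\omega&1 \end{bmatrix},\qquad H^{(1)}=\begin{bmatrix} i&1&1&1&1&1\\ 1&i&1&1&-1&-1\\ 1&1&i&-1&1&-1\\ 1&1&-1&i&-1&1\\ 1&-1&1&-1&i&1\\ 1&-1&-1&1&1&i \end{bmatrix}.$$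
   Context: A complex Hadamard matrix (CHM) of order $n$ is an $n\times n$ complex matrix $H$ all of whose entries have modulus one and which satisfies $HH^\dagger=nI$. A monomial unitary matrix is a unitary matrix each of whose rows and columns has exactly one nonzero entry, that entry having modulus one. Two $n\times n$ matrices $U,V$ are complex equivalent if $U=PVQ$ for some $n\times n$ monomial unitary matrices $P,Q$. *)

theory Defs
  imports Complex_Main
begin

text \<open>Square n x n complex matrices are represented as functions
  nat => nat => complex; only entries with indices i, j < n matter.\<close>

definition is_CHM :: "nat \<Rightarrow> (nat \<Rightarrow> nat \<Rightarrow> complex) \<Rightarrow> bool" where
  "is_CHM n H \<longleftrightarrow>
     (\<forall>i<n. \<forall>j<n. cmod (H i j) = 1) \<and>
     (\<forall>i<n. \<forall>j<n. (\<Sum>k<n. H i k * cnj (H j k)) = (if i = j then of_nat n else 0))"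

definition is_unitary :: "nat \<Rightarrow> (nat \<Rightarrow> nat \<Rightarrow> complex) \<Rightarrow> bool" where
  "is_unitary n U \<longleftrightarrow>
     (\<forall>i<n. \<forall>j<n. (\<Sum>k<n. U i k * cnj (U j k)) = (if i = j then 1 else 0))"

definition monomial_unitary :: "nat \<Rightarrow> (nat \<Rightarrow> nat \<Rightarrow> complex) \<Rightarrow> bool" where
  "monomial_unitary n P \<longleftrightarrow>
     is_unitary n P \<and>
     (\<forall>i<n. \<exists>!j. j < n \<and> P i j \<noteq> 0) \<and>
     (\<forall>j<n. \<exists>!i. i < n \<and> P i j \<noteq> 0) \<and>
     (\<forall>i<n. \<forall>j<n. P i j \<noteq> 0 \<longrightarrow> cmod (P i j) = 1)"

definition mat_mult :: "nat \<Rightarrow> (nat \<Rightarrow> nat \<Rightarrow> complex) \<Rightarrow> (nat \<Rightarrow> nat \<Rightarrow> complex)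
    \<Rightarrow> (nat \<Rightarrow> nat \<Rightarrow> complex)" where
  "mat_mult n A B = (\<lambda>i j. \<Sum>k<n. A i k * B k j)"

definition complex_equiv :: "nat \<Rightarrow> (nat \<Rightarrow> nat \<Rightarrow> complex) \<Rightarrow> (nat \<Rightarrow> nat \<Rightarrow> complex) \<Rightarrow> bool" where
  "complex_equiv n U V \<longleftrightarrow>
     (\<exists>P Q. monomial_unitary n P \<and> monomial_unitary n Q \<and>
        (\<forall>i<n. \<forall>j<n. U i j = mat_mult n (mat_mult n P V) Q i j))"

definition omega3 :: complex where
  "omega3 = cis (2 * pi / 3)"

definition tao_exp :: "nat list list" where
  "tao_exp = [[0,0,0,0,0,0],
              [0,0,1,1,2,2],
              [0,1,0,2,2,1],
              [0,1,2,0,1,2],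
              [0,2,2,1,0,1],
              [0,2,1,2,1,0]]"

definition S6_0 :: "nat \<Rightarrow> nat \<Rightarrow> complex" where
  "S6_0 i j = omega3 ^ (tao_exp ! i ! j)"

definition H1_list :: "complex list list" where
  "H1_list = [[\<i>,1,1,1,1,1],
              [1,\<i>,1,1,-1,-1],
              [1,1,\<i>,-1,1,-1],
              [1,1,-1,\<i>,-1,1],
              [1,-1,1,-1,\<i>,1],
              [1,-1,-1,1,1,\<i>]]"

definition H1 :: "nat \<Rightarrow> nat \<Rightarrow> complex" where
  "H1 i j = H1_list ! i ! j"

end

theory Submission
  imports Defs "HOL-Combinatorics.Permutations"
begin

(* Write the entries as powers a^e with e in {-1, 0, 1}.  Orthogonality of two rows says that
   a sum of powers a^d with |d| <= 2 vanishes; its real and imaginary parts are two relations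
   between the numbers of columns with a given exponent difference d, with coefficients
   cos t, cos 2t, sin t, sin 2t.  For two rows agreeing in some column they leave only
   cos t in {0, 1/2, -1/2, 1/4}.  The value 1/4 would make all row sums differ pairwise by 3,
   the value 1/2 would make every off-diagonal entry of the Gram matrix of the exponents at
   most -2, and a real a would give a real Hadamard matrix of order 6.  So a is a primitive
   fourth or third root of unity and H is given by an exponent matrix modulo 4 or 3.  Such a
   matrix is equivalent to a dephased one with sorted rows, and an exhaustive search over
   these normal forms, with rows having pairwise orthogonal residue patterns, finds only
   matrices that come with explicit permutations and phases making them equivalent to H1
   resp. S6_0. *)

section \<open>Monomial matrices and complex equivalence\<close>

lemma permutes_lessThan_less: "p permutes {..<n} \<Longrightarrow> i < n \<Longrightarrow> p i < n"
  using permutes_in_image by fastforce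

lemma monomial_unitary_permutation:
  assumes \<sigma>: "\<sigma> permutes {..<n}" and d: "\<forall>i<n. cmod (d i) = 1"
  shows "monomial_unitary n (\<lambda>i k. if k = \<sigma> i then d i else 0)"
proof -
  have \<sigma>_eq: "\<sigma> i = \<sigma> j \<longleftrightarrow> i = j" for i j
    using permutes_inj[OF \<sigma>] by (auto dest: injD)
  have unit: "d i * cnj (d i) = 1" "d i \<noteq> 0" if "i < n" for i
    using d that complex_norm_square[of "d i"] by auto
  have "is_unitary n (\<lambda>i k. if k = \<sigma> i then d i else 0)"
    unfolding is_unitary_def
  proof (intro allI impI)
    fix i j assume i: "i < n" and j: "j < n"
    have "(\<Sum>k<n. (if k = \<sigma> i then d i else 0) * cnj (if k = \<sigma> j then d j else 0))
        = (\<Sum>k<n. if k = \<sigma> i then (if i = j then d i * cnj (d j) else 0) else 0)"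
      by (rule sum.cong) (auto simp: \<sigma>_eq)
    also have "\<dots> = (if i = j then 1 else 0)"
      using permutes_lessThan_less[OF \<sigma> i] unit(1)[OF i] by (cases "i = j") (simp_all add: sum.delta)
    finally show "(\<Sum>k<n. (if k = \<sigma> i then d i else 0) * cnj (if k = \<sigma> j then d j else 0))
        = (if i = j then 1 else 0)" .
  qed
  moreover have "\<exists>!k. k < n \<and> (if k = \<sigma> i then d i else 0) \<noteq> 0" if "i < n" for i
    using permutes_lessThan_less[OF \<sigma> that] unit(2)[OF that] by auto
  moreover have "\<exists>!i. i < n \<and> (if k = \<sigma> i then d i else 0) \<noteq> 0" if "k < n" for k
  proof (rule ex1I[of _ "inv \<sigma> k"])
    show "inv \<sigma> k < n \<and> (if k = \<sigma> (inv \<sigma> k) then d (inv \<sigma> k) else 0) \<noteq> 0"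
      using permutes_lessThan_less[OF permutes_inv[OF \<sigma>] that] unit(2)
      by (simp add: permutes_inverses(1)[OF \<sigma>])
  qed (auto simp: permutes_inverses(2)[OF \<sigma>] split: if_splits)
  ultimately show ?thesis
    using d unfolding monomial_unitary_def by auto
qed

lemma complex_equiv_permutations:
  assumes \<sigma>: "\<sigma> permutes {..<n}" and \<rho>: "\<rho> permutes {..<n}"
    and d: "\<forall>i<n. cmod (d i) = 1" and f: "\<forall>j<n. cmod (f j) = 1"
    and H: "\<forall>i<n. \<forall>j<n. H i j = d i * f j * V (\<sigma> i) (\<rho> j)"
  shows "complex_equiv n H V"
proof -
  define P where "P = (\<lambda>i k. if k = \<sigma> i then d i else 0)"
  define Q where "Q = (\<lambda>l j. if l = \<rho> j then f j else 0)"
  have "monomial_unitary n (\<lambda>l j. if j = inv \<rho> l then f (inv \<rho> l) else 0)"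
    by (rule monomial_unitary_permutation[OF permutes_inv[OF \<rho>]])
       (use f permutes_lessThan_less[OF permutes_inv[OF \<rho>]] in blast)
  moreover have "(\<lambda>l j. if j = inv \<rho> l then f (inv \<rho> l) else 0) = Q"
    unfolding Q_def by (auto simp: fun_eq_iff permutes_inverses[OF \<rho>])
  ultimately have "monomial_unitary n Q" by simp
  moreover have "H i j = mat_mult n (mat_mult n P V) Q i j" if "i < n" "j < n" for i j
  proof -
    have "mat_mult n P V i l = (\<Sum>k<n. if k = \<sigma> i then d i * V k l else 0)" for l
      unfolding mat_mult_def P_def by (rule sum.cong) auto
    then have "mat_mult n P V i l = d i * V (\<sigma> i) l" for l
      using permutes_lessThan_less[OF \<sigma> \<open>i < n\<close>] by simp
    then show ?thesis
      using H that permutes_lessThan_less[OF \<rho> \<open>j < n\<close>]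
      unfolding mat_mult_def[of n "mat_mult n P V"] Q_def by (simp add: if_distrib cong: if_cong)
  qed
  ultimately show ?thesis
    unfolding complex_equiv_def using monomial_unitary_permutation[OF \<sigma> d] P_def by blast
qed

section \<open>Exponent matrices over a root of unity\<close>

lemma power_int_mod:
  fixes g :: "'a::division_ring"
  assumes "g powi m = 1"
  shows "g powi x = g powi (x mod m)"
proof (cases "m = 0")
  case False
  then have "g \<noteq> 0" using assms by auto
  have "g powi x = g powi (x mod m + m * (x div m))" by (simp add: mod_mult_div_eq)
  also have "\<dots> = g powi (x mod m) * (g powi m) powi (x div m)"
    using power_int_add[of g "x mod m" "m * (x div m)"] power_int_mult[of g m "x div m"] \<open>g \<noteq> 0\<close>
    by simp
  finally show ?thesis using assms by simp
qed simp

lemma power_int_mod_cong: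
  "g powi m = 1 \<Longrightarrow> x mod m = y mod m \<Longrightarrow> g powi x = (g::'a::division_ring) powi y"
  by (metis power_int_mod)

lemma cnj_power_int_unimodular:
  assumes "cmod g = 1"
  shows "cnj (g powi x) = g powi (- x)"
proof -
  have "g * cnj g = 1" using assms complex_norm_square[of g] by simp
  then have "cnj g = inverse g" by (simp add: inverse_unique)
  then show ?thesis by (simp add: power_int_minus power_int_inverse)
qed

definition exps_orthogonal :: "nat \<Rightarrow> complex \<Rightarrow> (nat \<Rightarrow> nat \<Rightarrow> int) \<Rightarrow> bool" where
  "exps_orthogonal n g X \<longleftrightarrow> (\<forall>i<n. \<forall>j<n. i \<noteq> j \<longrightarrow> (\<Sum>k<n. g powi (X i k - X j k)) = 0)"

lemma exps_orthogonal_of_CHM: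
  assumes C: "is_CHM n H" and g: "cmod g = 1" and H: "\<forall>i<n. \<forall>j<n. H i j = g powi X i j"
  shows "exps_orthogonal n g X"
  unfolding exps_orthogonal_def
proof (intro allI impI)
  fix i j assume i: "i < n" and j: "j < n" and "i \<noteq> j"
  then have "(\<Sum>k<n. H i k * cnj (H j k)) = 0" using C unfolding is_CHM_def by simp
  moreover have "H i k * cnj (H j k) = g powi (X i k - X j k)" if "k < n" for k
  proof -
    have "H i k * cnj (H j k) = g powi X i k * g powi (- X j k)"
      using H i j that cnj_power_int_unimodular[OF g] by (simp del: complex_cnj_power_int)
    moreover have "g \<noteq> 0" using g by auto
    ultimately show ?thesis using power_int_add[of g "X i k" "- X j k"] by simp
  qed
  ultimately show "(\<Sum>k<n. g powi (X i k - X j k)) = 0" by simp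
qed

definition exps_equiv :: "nat \<Rightarrow> int \<Rightarrow> (nat \<Rightarrow> nat \<Rightarrow> int) \<Rightarrow> (nat \<Rightarrow> nat \<Rightarrow> int) \<Rightarrow> bool" where
  "exps_equiv n m X Y \<longleftrightarrow> (\<exists>\<sigma> \<rho> \<delta> \<epsilon>. \<sigma> permutes {..<n} \<and> \<rho> permutes {..<n} \<and>
     (\<forall>i<n. \<forall>j<n. Y i j mod m = (\<delta> i + \<epsilon> j + X (\<sigma> i) (\<rho> j)) mod m))"

lemma exps_equivI:
  assumes "\<sigma> permutes {..<n}" "\<rho> permutes {..<n}"
    and "\<And>i j. i < n \<Longrightarrow> j < n \<Longrightarrow> Y i j mod m = (\<delta> i + \<epsilon> j + X (\<sigma> i) (\<rho> j)) mod m"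
  shows "exps_equiv n m X Y"
  using assms unfolding exps_equiv_def by blast

lemma exps_equiv_trans:
  assumes "exps_equiv n m X Y" "exps_equiv n m Y Z"
  shows "exps_equiv n m X Z"
proof -
  obtain \<sigma>1 \<rho>1 \<delta>1 \<epsilon>1 where 1: "\<sigma>1 permutes {..<n}" "\<rho>1 permutes {..<n}"
    "\<forall>i<n. \<forall>j<n. Y i j mod m = (\<delta>1 i + \<epsilon>1 j + X (\<sigma>1 i) (\<rho>1 j)) mod m"
    using assms(1) unfolding exps_equiv_def by blast
  obtain \<sigma>2 \<rho>2 \<delta>2 \<epsilon>2 where 2: "\<sigma>2 permutes {..<n}" "\<rho>2 permutes {..<n}"
    "\<forall>i<n. \<forall>j<n. Z i j mod m = (\<delta>2 i + \<epsilon>2 j + Y (\<sigma>2 i) (\<rho>2 j)) mod m"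
    using assms(2) unfolding exps_equiv_def by blast
  show ?thesis
  proof (rule exps_equivI[OF permutes_compose[OF 2(1) 1(1)] permutes_compose[OF 2(2) 1(2)]])
    fix i j assume i: "i < n" and j: "j < n"
    have "Y (\<sigma>2 i) (\<rho>2 j) mod m = (\<delta>1 (\<sigma>2 i) + \<epsilon>1 (\<rho>2 j) + X (\<sigma>1 (\<sigma>2 i)) (\<rho>1 (\<rho>2 j))) mod m"
      using 1(3) permutes_lessThan_less[OF 2(1) i] permutes_lessThan_less[OF 2(2) j] by blast
    then have "Z i j mod m = (\<delta>2 i + \<epsilon>2 j + (\<delta>1 (\<sigma>2 i) + \<epsilon>1 (\<rho>2 j) + X (\<sigma>1 (\<sigma>2 i)) (\<rho>1 (\<rho>2 j)))) mod m"
      using 2(3) i j by (metis mod_add_right_eq)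
    then show "Z i j mod m = ((\<delta>2 i + \<delta>1 (\<sigma>2 i)) + (\<epsilon>2 j + \<epsilon>1 (\<rho>2 j))
        + X ((\<sigma>1 \<circ> \<sigma>2) i) ((\<rho>1 \<circ> \<rho>2) j)) mod m"
      by (simp add: ac_simps)
  qed
qed

lemma exps_equiv_sym:
  assumes "exps_equiv n m X Y"
  shows "exps_equiv n m Y X"
proof -
  obtain \<sigma> \<rho> \<delta> \<epsilon> where e: "\<sigma> permutes {..<n}" "\<rho> permutes {..<n}"
    "\<forall>i<n. \<forall>j<n. Y i j mod m = (\<delta> i + \<epsilon> j + X (\<sigma> i) (\<rho> j)) mod m"
    using assms unfolding exps_equiv_def by blast
  show ?thesis
  proof (rule exps_equivI[OF permutes_inv[OF e(1)] permutes_inv[OF e(2)]])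
    fix i j assume i: "i < n" and j: "j < n"
    have "Y (inv \<sigma> i) (inv \<rho> j) mod m = (\<delta> (inv \<sigma> i) + \<epsilon> (inv \<rho> j) + X i j) mod m"
      using e(3) permutes_lessThan_less[OF permutes_inv[OF e(1)] i]
        permutes_lessThan_less[OF permutes_inv[OF e(2)] j]
      by (simp add: permutes_inverses(1)[OF e(1)] permutes_inverses(1)[OF e(2)])
    then have "(- \<delta> (inv \<sigma> i) + - \<epsilon> (inv \<rho> j) + Y (inv \<sigma> i) (inv \<rho> j)) mod m
        = (- \<delta> (inv \<sigma> i) + - \<epsilon> (inv \<rho> j) + (\<delta> (inv \<sigma> i) + \<epsilon> (inv \<rho> j) + X i j)) mod m"
      by (metis mod_add_right_eq)
    then show "X i j mod m = (- \<delta> (inv \<sigma> i) + - \<epsilon> (inv \<rho> j) + Y (inv \<sigma> i) (inv \<rho> j)) mod m"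
      by simp
  qed
qed

lemma exps_equiv_dephase: "exps_equiv n m X (\<lambda>i j. (X i j - X i 0 - X 0 j + X 0 0) mod m)"
  by (rule exps_equivI[OF permutes_id permutes_id, where \<delta> = "\<lambda>i. X 0 0 - X i 0" and \<epsilon> = "\<lambda>j. - X 0 j"])
     (simp add: algebra_simps)

lemma exps_equiv_permute_rows: "\<sigma> permutes {..<n} \<Longrightarrow> exps_equiv n m X (\<lambda>i j. X (\<sigma> i) j)"
  by (rule exps_equivI[OF _ permutes_id, where \<delta> = "\<lambda>_. 0" and \<epsilon> = "\<lambda>_. 0"]) simp_all

lemma exps_equiv_permute_cols: "\<rho> permutes {..<n} \<Longrightarrow> exps_equiv n m X (\<lambda>i j. X i (\<rho> j))"
  by (rule exps_equivI[OF permutes_id, where \<delta> = "\<lambda>_. 0" and \<epsilon> = "\<lambda>_. 0"]) simp_all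

lemma exps_orthogonal_equiv:
  assumes g: "g powi m = 1" "g \<noteq> 0" and orth: "exps_orthogonal n g X" and e: "exps_equiv n m X Y"
  shows "exps_orthogonal n g Y"
  unfolding exps_orthogonal_def
proof (intro allI impI)
  obtain \<sigma> \<rho> \<delta> \<epsilon> where e: "\<sigma> permutes {..<n}" "\<rho> permutes {..<n}"
    "\<forall>i<n. \<forall>j<n. Y i j mod m = (\<delta> i + \<epsilon> j + X (\<sigma> i) (\<rho> j)) mod m"
    using e unfolding exps_equiv_def by blast
  fix i j assume i: "i < n" and j: "j < n" and "i \<noteq> j"
  then have "\<sigma> i \<noteq> \<sigma> j" using permutes_inj[OF e(1)] by (auto dest: injD)
  have "g powi (Y i k - Y j k) = g powi (\<delta> i - \<delta> j) * g powi (X (\<sigma> i) (\<rho> k) - X (\<sigma> j) (\<rho> k))"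
    if "k < n" for k
  proof -
    have "(Y i k - Y j k) mod m
        = ((\<delta> i + \<epsilon> k + X (\<sigma> i) (\<rho> k)) - (\<delta> j + \<epsilon> k + X (\<sigma> j) (\<rho> k))) mod m"
      using e(3) i j that by (metis mod_diff_eq)
    also have "\<dots> = ((\<delta> i - \<delta> j) + (X (\<sigma> i) (\<rho> k) - X (\<sigma> j) (\<rho> k))) mod m"
      by (simp add: algebra_simps)
    finally have "g powi (Y i k - Y j k) = g powi ((\<delta> i - \<delta> j) + (X (\<sigma> i) (\<rho> k) - X (\<sigma> j) (\<rho> k)))"
      by (rule power_int_mod_cong[OF g(1)])
    then show ?thesis using g(2) by (simp add: power_int_add)
  qed
  then have "(\<Sum>k<n. g powi (Y i k - Y j k))
      = g powi (\<delta> i - \<delta> j) * (\<Sum>k<n. g powi (X (\<sigma> i) (\<rho> k) - X (\<sigma> j) (\<rho> k)))"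
    by (simp add: sum_distrib_left)
  also have "(\<Sum>k<n. g powi (X (\<sigma> i) (\<rho> k) - X (\<sigma> j) (\<rho> k))) = (\<Sum>k<n. g powi (X (\<sigma> i) k - X (\<sigma> j) k))"
    using sum.permute[OF e(2), of "\<lambda>k. g powi (X (\<sigma> i) k - X (\<sigma> j) k)"] by (simp add: comp_def)
  also have "\<dots> = 0"
    using orth \<open>\<sigma> i \<noteq> \<sigma> j\<close> permutes_lessThan_less[OF e(1)] i j unfolding exps_orthogonal_def by blast
  finally show "(\<Sum>k<n. g powi (Y i k - Y j k)) = 0" by simp
qed

lemma complex_equiv_of_exps_equiv:
  assumes g: "g powi m = 1" "cmod g = 1" and e: "exps_equiv n m Y X"
    and H: "\<forall>i<n. \<forall>j<n. H i j = g powi X i j" and V: "\<forall>i<n. \<forall>j<n. V i j = g powi Y i j"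
  shows "complex_equiv n H V"
proof -
  obtain \<sigma> \<rho> \<delta> \<epsilon> where e: "\<sigma> permutes {..<n}" "\<rho> permutes {..<n}"
    "\<forall>i<n. \<forall>j<n. X i j mod m = (\<delta> i + \<epsilon> j + Y (\<sigma> i) (\<rho> j)) mod m"
    using e unfolding exps_equiv_def by blast
  have "g \<noteq> 0" using g(2) by auto
  show ?thesis
  proof (rule complex_equiv_permutations[OF e(1,2)])
    show "\<forall>i<n. cmod (g powi \<delta> i) = 1" "\<forall>j<n. cmod (g powi \<epsilon> j) = 1"
      using g(2) by (simp_all add: norm_power_int)
    show "\<forall>i<n. \<forall>j<n. H i j = g powi \<delta> i * g powi \<epsilon> j * V (\<sigma> i) (\<rho> j)"
    proof (intro allI impI)
      fix i j assume i: "i < n" and j: "j < n"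
      have "H i j = g powi (\<delta> i + \<epsilon> j + Y (\<sigma> i) (\<rho> j))"
        using H i j power_int_mod_cong[OF g(1) e(3)[rule_format, OF i j]] by simp
      also have "\<dots> = g powi \<delta> i * g powi \<epsilon> j * V (\<sigma> i) (\<rho> j)"
        using V permutes_lessThan_less[OF e(1) i] permutes_lessThan_less[OF e(2) j]
          power_int_add[of g "\<delta> i + \<epsilon> j"] power_int_add[of g "\<delta> i"] \<open>g \<noteq> 0\<close>
        by simp
      finally show "H i j = g powi \<delta> i * g powi \<epsilon> j * V (\<sigma> i) (\<rho> j)" .
    qed
  qed
qed

section \<open>A normal form for exponent matrices\<close>

definition row :: "nat \<Rightarrow> (nat \<Rightarrow> nat \<Rightarrow> 'a) \<Rightarrow> nat \<Rightarrow> 'a list" where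
  "row n X i = map (X i) [0..<n]"

(* A row read as a base-m numeral; it only serves as a sort key for the rows below row 1, which
   breaks their permutation symmetry in the search. *)
definition base_value :: "int \<Rightarrow> int list \<Rightarrow> int" where
  "base_value m w = foldl (\<lambda>acc x. acc * m + x) 0 w"

lemma base_value_nonneg:
  assumes "0 \<le> m" "\<forall>x\<in>set w. 0 \<le> x"
  shows "0 \<le> base_value m w"
proof -
  have "0 \<le> foldl (\<lambda>acc x. acc * m + x) a w" if "0 \<le> a" for a
    using assms(2) that by (induction w arbitrary: a) (simp_all add: assms(1))
  then show ?thesis unfolding base_value_def by simp
qed

lemma sorting_permutation:
  fixes key :: "nat \<Rightarrow> 'a::linorder"
  obtains \<pi> where "\<pi> permutes {..<n}" "sorted (map (key \<circ> \<pi>) [0..<n])"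
proof -
  let ?xs = "map key [0..<n]"
  obtain \<pi> where \<pi>: "\<pi> permutes {..<length ?xs}" "permute_list \<pi> ?xs = sort ?xs"
    using mset_eq_permutation[of "sort ?xs" ?xs] by auto
  have \<pi>n: "\<pi> permutes {..<n}" using \<pi>(1) by simp
  have "permute_list \<pi> ?xs = map (key \<circ> \<pi>) [0..<n]"
    unfolding permute_list_def using permutes_lessThan_less[OF \<pi>n] by (auto intro!: map_cong)
  then have "sorted (map (key \<circ> \<pi>) [0..<n])" using \<pi>(2) by (metis sorted_sort)
  then show ?thesis using that \<pi>n by blast
qed

lemma sorting_permutation_fixing_prefix:
  fixes key :: "nat \<Rightarrow> 'a::linorder"
  assumes least: "\<And>i j. i < k \<Longrightarrow> i < j \<Longrightarrow> j < n \<Longrightarrow> key i < key j"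
  obtains \<pi> where "\<pi> permutes {..<n}" "\<forall>i<k. \<pi> i = i" "sorted (map (key \<circ> \<pi>) [0..<n])"
proof -
  obtain \<pi> where \<pi>: "\<pi> permutes {..<n}" and sorted: "sorted (map (key \<circ> \<pi>) [0..<n])"
    by (rule sorting_permutation)
  have fixes_prefix: "\<pi> i = i" if "i < k" for i
    using that
  proof (induction i rule: less_induct)
    case (less i)
    show ?case
    proof (cases "i < n")
      case i: True
      define j where "j = inv \<pi> i"
      have j: "j < n" "\<pi> j = i"
        using permutes_lessThan_less[OF permutes_inv[OF \<pi>] i] permutes_inverses(1)[OF \<pi>]
        by (simp_all add: j_def)
      have "\<not> j < i"
      proof
        assume "j < i"
        then have "\<pi> j = j" using less.IH less.prems by simp
        then show False using \<open>j < i\<close> j(2) by simp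
      qed
      then have "key (\<pi> i) \<le> key i"
        using sorted_nth_mono[OF sorted, of i j] j by simp
      moreover have "\<not> \<pi> i < i"
      proof
        assume "\<pi> i < i"
        then have "\<pi> (\<pi> i) = \<pi> i" using less.IH less.prems by simp
        then have "\<pi> i = i" by (rule injD[OF permutes_inj[OF \<pi>]])
        then show False using \<open>\<pi> i < i\<close> by simp
      qed
      moreover have "\<not> i < \<pi> i"
        using least[OF less.prems, of "\<pi> i"] permutes_lessThan_less[OF \<pi> i] calculation(1)
        by auto
      ultimately show ?thesis by simp
    next
      case False
      then show ?thesis using permutes_not_in[OF \<pi>] by simp
    qed
  qed
  show ?thesis by (rule that[OF \<pi> _ sorted]) (simp add: fixes_prefix)
qed

lemma exps_dephased_sorted_row:
  assumes m: "0 < m"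
  obtains C where "exps_equiv n m X C" "\<forall>i<n. \<forall>j<n. 0 \<le> C i j \<and> C i j < m"
    "\<forall>j<n. C 0 j = 0" "\<forall>i<n. C i 0 = 0" "sorted (row n C 1)"
proof -
  define D where "D = (\<lambda>i j. (X i j - X i 0 - X 0 j + X 0 0) mod m)"
  have D_range: "0 \<le> D i j \<and> D i j < m" for i j using m by (simp add: D_def)
  have D0: "D 0 j = 0" "D i 0 = 0" for i j by (simp_all add: D_def)
  define key where "key = (\<lambda>j. if j = 0 then -1 else D 1 j)"
  have least: "key i < key j" if "i < 1" "i < j" for i j
    using that D_range[of 1 j] by (simp add: key_def)
  obtain \<rho> where \<rho>: "\<rho> permutes {..<n}" "\<forall>i<1. \<rho> i = i" "sorted (map (key \<circ> \<rho>) [0..<n])"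
    by (rule sorting_permutation_fixing_prefix[OF least])
  have \<rho>0: "\<rho> j = 0 \<longleftrightarrow> j = 0" for j
    using \<rho>(2) injD[OF permutes_inj[OF \<rho>(1)], of j 0] by auto
  define C where "C = (\<lambda>i j. D i (\<rho> j))"
  have "C 1 j1 \<le> C 1 j2" if "j1 \<le> j2" "j2 < n" for j1 j2
  proof (cases "j1 = 0")
    case True
    then show ?thesis using \<rho>0[of 0] D0 D_range[of 1 "\<rho> j2"] by (simp add: C_def)
  next
    case False
    then have "key (\<rho> j1) \<le> key (\<rho> j2)" using sorted_nth_mono[OF \<rho>(3), of j1 j2] that by simp
    then show ?thesis using False that \<rho>0 by (simp add: C_def key_def)
  qed
  then have "sorted (row n C 1)" by (simp add: sorted_iff_nth_mono row_def)
  moreover have "exps_equiv n m X C"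
    unfolding C_def D_def by (rule exps_equiv_trans[OF exps_equiv_dephase exps_equiv_permute_cols[OF \<rho>(1)]])
  moreover have "\<forall>i<n. \<forall>j<n. 0 \<le> C i j \<and> C i j < m" "\<forall>j<n. C 0 j = 0" "\<forall>i<n. C i 0 = 0"
    using D_range D0 \<rho>0[of 0] by (simp_all add: C_def)
  ultimately show ?thesis using that by blast
qed

lemma exps_normal_form:
  assumes m: "0 < m"
  obtains N where "exps_equiv n m X N" "\<forall>i<n. \<forall>j<n. 0 \<le> N i j \<and> N i j < m"
    "\<forall>j<n. N 0 j = 0" "\<forall>i<n. N i 0 = 0" "sorted (row n N 1)"
    "sorted (map (\<lambda>i. base_value m (row n N i)) [2..<n])"
proof -
  obtain C where C: "exps_equiv n m X C" "\<forall>i<n. \<forall>j<n. 0 \<le> C i j \<and> C i j < m"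
    "\<forall>j<n. C 0 j = 0" "\<forall>i<n. C i 0 = 0" "sorted (row n C 1)"
    using exps_dephased_sorted_row[OF m] .
  define key where "key = (\<lambda>i. if i < 2 then int i - 2 else base_value m (row n C i))"
  have key_nonneg: "0 \<le> key i" if "2 \<le> i" "i < n" for i
    using that C(2) m base_value_nonneg[of m "row n C i"] by (auto simp: key_def row_def)
  have least: "key i < key j" if "i < 2" "i < j" "j < n" for i j
    using that key_nonneg[of j] by (cases "j < 2") (auto simp: key_def)
  obtain \<pi> where \<pi>: "\<pi> permutes {..<n}" "\<forall>i<2. \<pi> i = i" "sorted (map (key \<circ> \<pi>) [0..<n])"
    by (rule sorting_permutation_fixing_prefix[OF least])
  have \<pi>01: "\<pi> 0 = 0" "\<pi> 1 = 1" using \<pi>(2) by simp_all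
  have \<pi>_ge: "2 \<le> \<pi> i" if "2 \<le> i" for i
  proof -
    have "\<pi> i \<noteq> \<pi> 0" "\<pi> i \<noteq> \<pi> 1"
      using that by (simp_all add: inj_eq[OF permutes_inj[OF \<pi>(1)]])
    then show ?thesis unfolding \<pi>01 by linarith
  qed
  define N where "N = (\<lambda>i j. C (\<pi> i) j)"
  have "map (\<lambda>i. base_value m (row n N i)) [2..<n] = map (key \<circ> \<pi>) [2..<n]"
    by (rule map_cong[OF refl]) (use \<pi>_ge in \<open>fastforce simp: N_def key_def row_def\<close>)
  moreover have "sorted (map (key \<circ> \<pi>) [2..<n])"
    using sorted_wrt_drop[OF \<pi>(3), of 2] by (metis drop_map drop_upt add_0)
  ultimately have "sorted (map (\<lambda>i. base_value m (row n N i)) [2..<n])" by (simp only:)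
  moreover have "exps_equiv n m X N"
    unfolding N_def by (rule exps_equiv_trans[OF C(1) exps_equiv_permute_rows[OF \<pi>(1)]])
  moreover have "\<forall>i<n. \<forall>j<n. 0 \<le> N i j \<and> N i j < m" "\<forall>i<n. N i 0 = 0"
    using C(2,4) permutes_lessThan_less[OF \<pi>(1)] by (simp_all add: N_def)
  moreover have "\<forall>j<n. N 0 j = 0" "sorted (row n N 1)"
    using C(3,5) \<pi>01 by (simp_all add: N_def row_def)
  ultimately show ?thesis using that by blast
qed

section \<open>Vanishing sums of cube and fourth roots of unity\<close>

lemma sum_by_values:
  fixes f :: "'b \<Rightarrow> 'a::semiring_1"
  assumes R: "finite R" "\<forall>k<n. r k \<in> R"
  shows "(\<Sum>k<n. f (r k)) = (\<Sum>v\<in>R. of_nat (count_list (map r [0..<n]) v) * f v)"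
  using R(2)
proof (induction n)
  case (Suc n)
  have "of_nat (count_list (map r [0..<Suc n]) v) * f v
      = of_nat (count_list (map r [0..<n]) v) * f v + (if r n = v then f v else 0)" for v
    by (simp add: distrib_right)
  then have "(\<Sum>v\<in>R. of_nat (count_list (map r [0..<Suc n]) v) * f v)
      = (\<Sum>v\<in>R. of_nat (count_list (map r [0..<n]) v) * f v) + (\<Sum>v\<in>R. if r n = v then f v else 0)"
    by (simp add: sum.distrib)
  also have "(\<Sum>v\<in>R. if r n = v then f v else 0) = f (r n)"
    using Suc.prems R(1) by (simp add: sum.delta)
  finally show ?case using Suc by simp
qed simp

(* The residues of the exponents of a vanishing sum of cube roots of unity (m = 3) occur
   equally often; for fourth roots (any other m) residues 0, 2 and residues 1, 3 do. *)
definition zero_sum_pattern :: "int \<Rightarrow> int list \<Rightarrow> bool" where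
  "zero_sum_pattern m rs \<longleftrightarrow>
     (if m = 3 then count_list rs 0 = count_list rs 1 \<and> count_list rs 1 = count_list rs 2
      else count_list rs 0 = count_list rs 2 \<and> count_list rs 1 = count_list rs 3)"

lemma omega3_eq: "omega3 = Complex (-1/2) (sqrt 3 / 2)"
proof -
  have "sin (2 * pi / 3) = sqrt 3 / 2" using sin_120' by (simp add: mult.commute)
  then show ?thesis by (intro complex_eqI) (simp_all add: omega3_def cos_120)
qed

lemma omega3_squared: "omega3 ^ 2 = cnj omega3"
  by (simp add: omega3_eq power2_eq_square complex_eq_iff)

lemma omega3_powi_3: "omega3 powi 3 = 1"
proof -
  have "omega3 ^ 3 = cis (real 3 * (2 * pi / 3))" unfolding omega3_def by (rule DeMoivre)
  then show ?thesis by simp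
qed

lemma norm_omega3: "cmod omega3 = 1"
  by (simp add: omega3_def)

lemma zero_sum_pattern_omega3:
  assumes "(\<Sum>k<n. omega3 powi d k) = 0"
  shows "zero_sum_pattern 3 (map (\<lambda>k. d k mod 3) [0..<n])"
proof -
  define c where "c v = real (count_list (map (\<lambda>k. d k mod 3) [0..<n]) v)" for v
  have "(\<Sum>k<n. omega3 powi d k) = (\<Sum>k<n. omega3 powi (d k mod 3))"
    using power_int_mod[OF omega3_powi_3] by simp
  also have "\<dots> = (\<Sum>v\<in>{0,1,2}. of_real (c v) * omega3 powi v)"
    by (subst sum_by_values[of "{0,1,2}"]) (auto simp: c_def)
  finally have "c 0 + c 1 * omega3 + c 2 * cnj omega3 = 0"
    using assms by (simp add: omega3_squared[symmetric] power2_eq_square algebra_simps)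
  then have "c 0 - c 1 / 2 - c 2 / 2 = 0" "(c 1 - c 2) * (sqrt 3 / 2) = 0"
    by (simp_all add: omega3_eq complex_eq_iff algebra_simps)
  then show ?thesis by (simp add: zero_sum_pattern_def c_def)
qed

lemma zero_sum_pattern_i:
  assumes "(\<Sum>k<n. \<i> powi d k) = 0"
  shows "zero_sum_pattern 4 (map (\<lambda>k. d k mod 4) [0..<n])"
proof -
  define c where "c v = real (count_list (map (\<lambda>k. d k mod 4) [0..<n]) v)" for v
  have "\<i> powi 4 = 1" by simp
  then have "(\<Sum>k<n. \<i> powi d k) = (\<Sum>k<n. \<i> powi (d k mod 4))"
    using power_int_mod by metis
  also have "\<dots> = (\<Sum>v\<in>{0,1,2,3}. of_real (c v) * \<i> powi v)"
    by (subst sum_by_values[of "{0,1,2,3}"]) (auto simp: c_def)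
  finally have "c 0 + c 1 * \<i> - c 2 - c 3 * \<i> = 0"
    using assms by (simp add: power_numeral_reduce algebra_simps)
  then have "c 0 - c 2 = 0" "c 1 - c 3 = 0"
    by (simp_all add: complex_eq_iff)
  then show ?thesis by (simp add: zero_sum_pattern_def c_def)
qed

section \<open>Exhaustive search over normal forms\<close>

definition orth_rows :: "int \<Rightarrow> int list \<Rightarrow> int list \<Rightarrow> bool" where
  "orth_rows m v w \<longleftrightarrow> zero_sum_pattern m (map2 (\<lambda>x y. (x - y) mod m) v w)"

definition orth_le :: "int \<Rightarrow> int list \<Rightarrow> int list \<Rightarrow> bool" where
  "orth_le m v w \<longleftrightarrow> orth_rows m v w \<and> base_value m v \<le> base_value m w"

fun residue_words :: "int \<Rightarrow> nat \<Rightarrow> int list list" where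
  "residue_words m 0 = [[]]"
| "residue_words m (Suc n) = concat (map (\<lambda>x. map ((#) x) (residue_words m n)) [0..m - 1])"

definition candidate_rows :: "int \<Rightarrow> int list list" where
  "candidate_rows m = filter (\<lambda>w. orth_rows m w (replicate 6 0)) (map ((#) 0) (residue_words m 5))"

fun extend_chains ::
    "('a \<Rightarrow> 'a \<Rightarrow> bool) \<Rightarrow> ('a list \<Rightarrow> 'a list list) \<Rightarrow> 'a list \<Rightarrow> 'a list \<Rightarrow> 'a list list" where
  "extend_chains R f cs [] = []"
| "extend_chains R f cs (w # ws) = map ((#) w) (f (filter (R w) cs)) @ extend_chains R f cs ws"

fun orth_chains :: "int \<Rightarrow> nat \<Rightarrow> int list list \<Rightarrow> int list list list" where
  "orth_chains m 0 cs = [[]]"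
| "orth_chains m (Suc k) cs = extend_chains (orth_le m) (orth_chains m k) cs cs"

(* Rows 1 to 5 of the normal forms: row 1 sorted, rows 2 to 5 ordered by base_value, and all
   rows, including the zero row 0, pairwise orthogonal. *)
definition normal_row_tuples :: "int \<Rightarrow> int list list list" where
  "normal_row_tuples m = extend_chains (orth_rows m) (orth_chains m 4)
     (candidate_rows m) (filter sorted (candidate_rows m))"

lemma set_residue_words:
  "set (residue_words m n) = {w. length w = n \<and> (\<forall>x\<in>set w. 0 \<le> x \<and> x < m)}"
proof (induction n)
  case (Suc n)
  show ?case
  proof (intro set_eqI iffI)
    fix w assume "w \<in> {w. length w = Suc n \<and> (\<forall>x\<in>set w. 0 \<le> x \<and> x < m)}"
    then show "w \<in> set (residue_words m (Suc n))" using Suc by (cases w) auto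
  qed (use Suc in auto)
qed auto

lemma extend_chains_mem:
  "w \<in> set ws \<Longrightarrow> vs \<in> set (f (filter (R w) cs)) \<Longrightarrow> w # vs \<in> set (extend_chains R f cs ws)"
  by (induction ws) auto

lemma orth_chains_mem:
  "set ws \<subseteq> set cs \<Longrightarrow> sorted_wrt (orth_le m) ws \<Longrightarrow> ws \<in> set (orth_chains m (length ws) cs)"
proof (induction ws arbitrary: cs)
  case (Cons w ws)
  then have "ws \<in> set (orth_chains m (length ws) (filter (orth_le m w) cs))"
    by (intro Cons.IH) auto
  then show ?case using Cons.prems by (auto intro: extend_chains_mem)
qed simp

lemma normal_row_tuples_mem:
  assumes "w \<in> set (candidate_rows m)" "sorted w" "set ws \<subseteq> set (candidate_rows m)"
    "\<forall>v\<in>set ws. orth_rows m w v" "sorted_wrt (orth_le m) ws" "length ws = 4"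
  shows "w # ws \<in> set (normal_row_tuples m)"
  unfolding normal_row_tuples_def
  by (rule extend_chains_mem)
     (use assms orth_chains_mem[of ws "filter (orth_rows m w) (candidate_rows m)" m] in auto)

(* ps, rs: row and column permutations; ds, es: exponents of the row and column phases. *)
definition equiv_certificate ::
    "int \<Rightarrow> (nat \<Rightarrow> nat \<Rightarrow> int) \<Rightarrow> int list list \<Rightarrow> nat list \<times> nat list \<times> int list \<times> int list \<Rightarrow> bool" where
  "equiv_certificate m V M c \<longleftrightarrow> (case c of (ps, rs, ds, es) \<Rightarrow>
     length ps = 6 \<and> distinct ps \<and> list_all (\<lambda>i. i < 6) ps \<and>
     length rs = 6 \<and> distinct rs \<and> list_all (\<lambda>j. j < 6) rs \<and>
     list_all (\<lambda>i. list_all (\<lambda>j. M ! i ! j mod m = (ds ! i + es ! j + V (ps ! i) (rs ! j)) mod m)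
       [0..<6]) [0..<6])"

definition S6_0_exps :: "nat \<Rightarrow> nat \<Rightarrow> int" where
  "S6_0_exps i j = int (tao_exp ! i ! j)"

definition H1_exps :: "nat \<Rightarrow> nat \<Rightarrow> int" where
  "H1_exps i j = [[1,0,0,0,0,0], [0,1,0,0,2,2], [0,0,1,2,0,2],
                  [0,0,2,1,2,0], [0,2,0,2,1,0], [0,2,2,0,0,1]] ! i ! j"

definition S6_0_certificate_list :: "(nat list \<times> nat list \<times> int list \<times> int list) list" where
  "S6_0_certificate_list =
    [([0,1,2,3,5,4], [0,1,2,3,5,4], [0,0,0,0,0,0], [0,0,0,0,0,0]),
     ([0,1,2,3,5,4], [0,1,2,3,4,5], [0,0,0,0,0,0], [0,0,0,0,0,0])]"

definition H1_certificate_list :: "(nat list \<times> nat list \<times> int list \<times> int list) list" where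
  "H1_certificate_list =
    [([0,1,4,2,3,5], [5,4,0,2,3,1], [0,2,0,2,0,3], [0,0,3,0,0,0]),
     ([0,1,2,5,4,3], [2,3,1,5,4,0], [0,0,3,2,0,2], [0,0,0,0,0,3]),
     ([0,1,4,2,3,5], [5,4,0,3,2,1], [0,2,0,2,0,3], [0,0,3,0,0,0]),
     ([0,1,2,5,4,3], [2,3,1,4,5,0], [0,0,3,2,0,2], [0,0,0,0,0,3]),
     ([0,1,2,3,5,4], [1,4,5,0,2,3], [0,3,0,0,2,2], [0,0,0,3,0,0]),
     ([0,1,2,3,5,4], [1,4,5,0,3,2], [0,3,0,0,2,2], [0,0,0,3,0,0]),
     ([0,1,4,2,5,3], [0,2,3,1,5,4], [3,0,0,0,0,0], [0,1,1,1,1,1]),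
     ([0,1,4,2,5,3], [0,2,3,1,4,5], [3,0,0,0,0,0], [0,1,1,1,1,1])]"

lemma S6_0_certified:
  "list_all (\<lambda>ws. list_ex (equiv_certificate 3 S6_0_exps (replicate 6 0 # ws)) S6_0_certificate_list)
     (normal_row_tuples 3)"
  by code_simp

lemma H1_certified:
  "list_all (\<lambda>ws. list_ex (equiv_certificate 4 H1_exps (replicate 6 0 # ws)) H1_certificate_list)
     (normal_row_tuples 4)"
  by code_simp

lemma all_less_6: "(\<forall>i<6. P i) \<longleftrightarrow> P 0 \<and> P 1 \<and> P 2 \<and> P 3 \<and> P 4 \<and> P (5::nat)"
proof -
  have "i < 6 \<longleftrightarrow> i = 0 \<or> i = 1 \<or> i = 2 \<or> i = 3 \<or> i = 4 \<or> i = 5" for i :: nat by arith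
  then show ?thesis by auto
qed

lemma list_permutes:
  assumes "length ps = n" "distinct ps" "list_all (\<lambda>i. i < n) ps"
  shows "(\<lambda>i. if i < n then ps ! i else i) permutes {..<n}"
proof (rule bij_imp_permutes)
  have "set ps = {..<n}"
    using assms by (simp add: card_subset_eq distinct_card list_all_iff subsetI)
  then show "bij_betw (\<lambda>i. if i < n then ps ! i else i) {..<n} {..<n}"
    using assms(1,2) by (auto simp: bij_betw_def inj_on_def nth_eq_iff_index_eq set_conv_nth)
qed simp

lemma exps_equiv_of_certificate:
  assumes c: "equiv_certificate m V M c" and N: "\<forall>i<6. row 6 N i = M ! i"
  shows "exps_equiv 6 m V N"
proof -
  obtain ps rs ds es where c_eq: "c = (ps, rs, ds, es)" by (cases c)
  note c = c[unfolded c_eq equiv_certificate_def prod.case]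
  show ?thesis
  proof (rule exps_equivI[OF list_permutes list_permutes])
    fix i j :: nat assume ij: "i < 6" "j < 6"
    have "row 6 N i ! j = N i j" using ij by (simp add: row_def)
    then have "N i j = M ! i ! j" using N ij by simp
    then show "N i j mod m
        = (ds ! i + es ! j + V (if i < 6 then ps ! i else i) (if j < 6 then rs ! j else j)) mod m"
      using c ij by (simp add: list_all_iff)
  qed (simp_all add: c)
qed

lemma exps_equiv_of_orthogonal:
  assumes g: "g powi m = 1" "g \<noteq> 0" and m: "0 < m"
    and pattern: "\<And>d. (\<Sum>k<6. g powi d k) = 0 \<Longrightarrow> zero_sum_pattern m (map (\<lambda>k. d k mod m) [0..<6])"
    and certified: "list_all (\<lambda>ws. list_ex (equiv_certificate m V (replicate 6 0 # ws)) cs)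
      (normal_row_tuples m)"
    and orth: "exps_orthogonal 6 g X"
  shows "exps_equiv 6 m V X"
proof -
  obtain N where N: "exps_equiv 6 m X N" "\<forall>i<6. \<forall>j<6. 0 \<le> N i j \<and> N i j < m"
    "\<forall>j<6. N 0 j = 0" "\<forall>i<6. N i 0 = 0" "sorted (row 6 N 1)"
    "sorted (map (\<lambda>i. base_value m (row 6 N i)) [2..<6])"
    using exps_normal_form[OF m] .
  have "exps_orthogonal 6 g N" by (rule exps_orthogonal_equiv[OF g orth N(1)])
  then have orth_N: "orth_rows m (row 6 N i) (row 6 N j)" if "i < 6" "j < 6" "i \<noteq> j" for i j
    using pattern[of "\<lambda>k. N i k - N j k"] that
    unfolding exps_orthogonal_def orth_rows_def row_def by (simp add: map2_map_map)
  have "map (N 0) [0..<6] = map (\<lambda>_. 0) [0..<6]" by (rule map_cong) (use N(3) in auto)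
  then have row_0: "row 6 N 0 = replicate 6 0" by (simp add: row_def map_replicate_const)
  have candidate: "row 6 N i \<in> set (candidate_rows m)" if "0 < i" "i < 6" for i
  proof -
    have "row 6 N i = 0 # map (N i) [1..<6]" using N(4) that by (simp add: row_def upt_conv_Cons)
    moreover have "map (N i) [1..<6] \<in> set (residue_words m 5)"
      using N(2) that by (auto simp: set_residue_words)
    moreover have "orth_rows m (row 6 N i) (replicate 6 0)"
      using orth_N[of i 0] that row_0 by simp
    ultimately show ?thesis unfolding candidate_rows_def by auto
  qed
  have upt_2_6: "[2..<6] = [2, 3, 4, 5::nat]" by (simp add: upt_rec)
  have "sorted_wrt (orth_le m) (map (row 6 N) [2..<6])"
    using N(6) orth_N unfolding upt_2_6 by (auto simp: orth_le_def)
  then have "row 6 N 1 # map (row 6 N) [2..<6] \<in> set (normal_row_tuples m)"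
    using candidate N(5) orth_N unfolding upt_2_6
    by (intro normal_row_tuples_mem) auto
  then obtain c where "equiv_certificate m V (replicate 6 0 # row 6 N 1 # map (row 6 N) [2..<6]) c"
    using certified by (auto simp: list_all_iff list_ex_iff)
  moreover have "\<forall>i<6. row 6 N i = (replicate 6 0 # row 6 N 1 # map (row 6 N) [2..<6]) ! i"
    using row_0 unfolding upt_2_6 all_less_6 by simp
  ultimately have "exps_equiv 6 m V N" by (rule exps_equiv_of_certificate)
  then show ?thesis using exps_equiv_trans exps_equiv_sym[OF N(1)] by blast
qed

lemma complex_equiv_S6_0:
  assumes C: "is_CHM 6 H" and H: "\<forall>i<6. \<forall>j<6. H i j = omega3 powi X i j"
  shows "complex_equiv 6 H S6_0"
proof -
  have "omega3 \<noteq> 0" using norm_omega3 by auto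
  moreover have "exps_orthogonal 6 omega3 X"
    by (rule exps_orthogonal_of_CHM[OF C norm_omega3 H])
  ultimately have "exps_equiv 6 3 S6_0_exps X"
    by (intro exps_equiv_of_orthogonal[OF omega3_powi_3 _ _ zero_sum_pattern_omega3 S6_0_certified])
       simp_all
  moreover have "\<forall>i<6. \<forall>j<6. S6_0 i j = omega3 powi S6_0_exps i j"
    by (simp add: all_less_6 S6_0_def S6_0_exps_def tao_exp_def)
  ultimately show ?thesis
    by (rule complex_equiv_of_exps_equiv[OF omega3_powi_3 norm_omega3 _ H])
qed

lemma complex_equiv_H1:
  assumes C: "is_CHM 6 H" and H: "\<forall>i<6. \<forall>j<6. H i j = \<i> powi X i j"
  shows "complex_equiv 6 H H1"
proof -
  have i4: "\<i> powi 4 = 1" and norm_i: "cmod \<i> = 1" by simp_all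
  have "exps_orthogonal 6 \<i> X"
    by (rule exps_orthogonal_of_CHM[OF C norm_i H])
  then have "exps_equiv 6 4 H1_exps X"
    by (intro exps_equiv_of_orthogonal[OF i4 _ _ zero_sum_pattern_i H1_certified]) simp_all
  moreover have "\<forall>i<6. \<forall>j<6. H1 i j = \<i> powi H1_exps i j"
    by (simp add: all_less_6 H1_def H1_list_def H1_exps_def)
  ultimately show ?thesis
    by (rule complex_equiv_of_exps_equiv[OF i4 norm_i _ H])
qed

section \<open>The possible values of the entry a\<close>

lemma exps_of_entries:
  assumes a: "cmod a = 1" and H: "\<forall>i<n. \<forall>j<n. H i j \<in> {1, a, cnj a}"
  obtains E where "\<forall>i<n. \<forall>j<n. E i j \<in> {-1, 0, 1} \<and> H i j = a powi E i j"
proof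
  have "cnj a = a powi (-1)" using cnj_power_int_unimodular[OF a, of 1] by simp
  then show "\<forall>i<n. \<forall>j<n. (if H i j = 1 then 0 else if H i j = a then 1 else -1) \<in> {-1, 0, 1::int}
      \<and> H i j = a powi (if H i j = 1 then 0 else if H i j = a then 1 else -1)"
    using H by auto
qed

lemma real_CHM_order_dvd_4:
  assumes C: "is_CHM n H" and n: "3 \<le> n" and H: "\<forall>i<n. \<forall>j<n. H i j = 1 \<or> H i j = -1"
  shows "4 dvd n"
proof -
  define t where "t k = (if H 0 k = H 1 k \<and> H 0 k = H 2 k then 1 else 0 :: nat)" for k
  have "(H 0 k + H 1 k) * (cnj (H 0 k) + cnj (H 2 k)) = 4 * of_nat (t k)" if "k < n" for k
  proof -
    have "(H 0 k = 1 \<or> H 0 k = -1) \<and> (H 1 k = 1 \<or> H 1 k = -1) \<and> (H 2 k = 1 \<or> H 2 k = -1)"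
      using H that n by simp
    then show ?thesis by (elim conjE disjE) (simp_all add: t_def)
  qed
  then have "of_nat (4 * (\<Sum>k<n. t k)) = (\<Sum>k<n. (H 0 k + H 1 k) * (cnj (H 0 k) + cnj (H 2 k)))"
    by (simp add: sum_distrib_left)
  also have "\<dots> = (\<Sum>k<n. H 0 k * cnj (H 0 k)) + (\<Sum>k<n. H 0 k * cnj (H 2 k))
      + (\<Sum>k<n. H 1 k * cnj (H 0 k)) + (\<Sum>k<n. H 1 k * cnj (H 2 k))"
    by (simp add: algebra_simps sum.distrib)
  also have "\<dots> = of_nat n"
    using C n unfolding is_CHM_def by simp
  finally show ?thesis by (metis dvd_triv_left of_nat_eq_iff)
qed

lemma sum_gram_nonneg:
  fixes E :: "nat \<Rightarrow> nat \<Rightarrow> 'a::linordered_idom"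
  shows "0 \<le> (\<Sum>i<r. \<Sum>j<r. \<Sum>k<n. E i k * E j k)"
proof -
  have "0 \<le> (\<Sum>k<n. (\<Sum>i<r. E i k)\<^sup>2)" by (simp add: sum_nonneg)
  also have "\<dots> = (\<Sum>k<n. \<Sum>i<r. \<Sum>j<r. E i k * E j k)"
    by (simp add: power2_eq_square sum_product)
  also have "\<dots> = (\<Sum>i<r. \<Sum>k<n. \<Sum>j<r. E i k * E j k)"
    by (rule sum.swap)
  also have "\<dots> = (\<Sum>i<r. \<Sum>j<r. \<Sum>k<n. E i k * E j k)"
    by (rule sum.cong[OF refl]) (rule sum.swap)
  finally show ?thesis .
qed

lemma pair_cos_equations:
  fixes a :: complex and d :: "nat \<Rightarrow> int"
  assumes a: "cmod a = 1" and d: "\<forall>k<n. \<bar>d k\<bar> \<le> 2" and sum: "(\<Sum>k<n. a powi d k) = 0"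
  defines "c \<equiv> \<lambda>v. real (count_list (map d [0..<n]) v)"
  shows "c 0 + Re a * (c 1 + c (-1)) + (2 * (Re a)\<^sup>2 - 1) * (c 2 + c (-2)) = 0"
    and "Im a * (c 1 - c (-1) + 2 * Re a * (c 2 - c (-2))) = 0"
proof -
  have R: "\<forall>k<n. d k \<in> {-2, -1, 0, 1, 2}" using d by force
  have "cnj a = a powi (-1)" using cnj_power_int_unimodular[OF a, of 1] by simp
  then have inv: "a powi (-1) = cnj a" "a powi (-2) = cnj a ^ 2"
    using power_int_mult[of a "-1" 2] by simp_all
  have "(\<Sum>k<n. a powi d k) = (\<Sum>v\<in>{-2, -1, 0, 1, 2}. of_real (c v) * a powi v)"
    by (subst sum_by_values[OF _ R]) (simp_all add: c_def)
  then have "of_real (c (-2)) * cnj a ^ 2 + of_real (c (-1)) * cnj a + of_real (c 0)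
      + of_real (c 1) * a + of_real (c 2) * a ^ 2 = 0"
    using sum inv by (simp add: algebra_simps)
  then have re: "c 0 + Re a * (c 1 + c (-1)) + ((Re a)\<^sup>2 - (Im a)\<^sup>2) * (c 2 + c (-2)) = 0"
    and im: "Im a * (c 1 - c (-1) + 2 * Re a * (c 2 - c (-2))) = 0"
    by (simp_all add: complex_eq_iff power2_eq_square algebra_simps)
  have "(Im a)\<^sup>2 = 1 - (Re a)\<^sup>2" using a by (simp add: cmod_def)
  with re show "c 0 + Re a * (c 1 + c (-1)) + (2 * (Re a)\<^sup>2 - 1) * (c 2 + c (-2)) = 0"
    by (simp add: algebra_simps)
  show "Im a * (c 1 - c (-1) + 2 * Re a * (c 2 - c (-2))) = 0" by (fact im)
qed

definition diff_count :: "(nat \<Rightarrow> nat \<Rightarrow> int) \<Rightarrow> nat \<Rightarrow> nat \<Rightarrow> int \<Rightarrow> nat" where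
  "diff_count E i j v = count_list (map (\<lambda>k. E i k - E j k) [0..<6]) v"

lemma diff_count_identities:
  assumes E: "\<forall>k<6. E i k \<in> {-1, 0, 1} \<and> E j k \<in> {-1, 0, 1}"
  defines "c \<equiv> diff_count E i j"
  shows "c 0 + c 1 + c (-1) + c 2 + c (-2) = 6"
    and "(\<Sum>k<6. E i k) - (\<Sum>k<6. E j k) = int (c 1) - int (c (-1)) + 2 * (int (c 2) - int (c (-2)))"
    and "(\<Sum>k<6. E i k * E j k) \<le> int (c 0) - int (c 2) - int (c (-2))"
proof -
  have R: "\<forall>k<6. E i k - E j k \<in> {-2, -1, 0, 1, 2}" using E by auto
  have by_values: "(\<Sum>k<6. f (E i k - E j k)) = (\<Sum>v\<in>{-2, -1, 0, 1, 2}. of_nat (c v) * f v)"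
    for f :: "int \<Rightarrow> 'a::semiring_1"
    unfolding c_def diff_count_def by (rule sum_by_values[OF _ R]) simp
  show "c 0 + c 1 + c (-1) + c 2 + c (-2) = 6"
    using by_values[of "\<lambda>_. 1::nat"] by simp
  show "(\<Sum>k<6. E i k) - (\<Sum>k<6. E j k) = int (c 1) - int (c (-1)) + 2 * (int (c 2) - int (c (-2)))"
    using by_values[of id] by (simp add: sum_subtractf[symmetric])
  define g :: "int \<Rightarrow> int" where "g v = (if v = 0 then 1 else if \<bar>v\<bar> = 2 then -1 else 0)" for v
  have "E i k * E j k \<le> g (E i k - E j k)" if "k < 6" for k
    using E that by (auto simp: g_def)
  then have "(\<Sum>k<6. E i k * E j k) \<le> (\<Sum>k<6. g (E i k - E j k))" by (intro sum_mono) simp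
  also have "\<dots> = int (c 0) - int (c 2) - int (c (-2))"
    using by_values[of g] by (simp add: g_def)
  finally show "(\<Sum>k<6. E i k * E j k) \<le> int (c 0) - int (c 2) - int (c (-2))" .
qed

lemma rational_cos_candidates:
  fixes c0 c1 c1' c2 c2' :: nat
  defines "A \<equiv> int c1 - int c1'" and "B \<equiv> int c2 - int c2'"
  assumes total: "c0 + c1 + c1' + c2 + c2' = 6" "1 \<le> c0"
    and B: "B \<noteq> 0" "\<bar>A\<bar> < 2 * \<bar>B\<bar>"
    and eq: "4 * B\<^sup>2 * c0 - 2 * A * B * (c1 + c1') + 2 * A\<^sup>2 * (c2 + c2') - 4 * B\<^sup>2 * (c2 + c2') = 0"
  shows "A = 0 \<or> A = B \<or> A = - B \<or> B = - 2 * A"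
proof -
  have table: "\<forall>c1\<in>set [0..<6]. \<forall>c1'\<in>set [0..<6]. \<forall>c2\<in>set [0..<6]. \<forall>c2'\<in>set [0..<6].
      let A = int c1 - int c1'; B = int c2 - int c2'; S1 = int (c1 + c1'); S2 = int (c2 + c2') in
      S1 + S2 \<le> 5 \<and> B \<noteq> 0 \<and> \<bar>A\<bar> < 2 * \<bar>B\<bar> \<and>
      4 * B\<^sup>2 * (6 - S1 - S2) - 2 * A * B * S1 + 2 * A\<^sup>2 * S2 - 4 * B\<^sup>2 * S2 = 0
        \<longrightarrow> A = 0 \<or> A = B \<or> A = - B \<or> B = - 2 * A"
    by code_simp
  have "c1 \<in> set [0..<6]" "c1' \<in> set [0..<6]" "c2 \<in> set [0..<6]" "c2' \<in> set [0..<6]"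
    using total by auto
  note at_counts = table[rule_format, OF this, unfolded Let_def]
  have "int (c1 + c1') + int (c2 + c2') \<le> 5" "int c0 = 6 - int (c1 + c1') - int (c2 + c2')"
    using total by simp_all
  then show ?thesis
    using at_counts B eq unfolding A_def B_def by simp
qed

lemma cos_cases_balanced:
  fixes x :: real and c0 c1 c1' c2 c2' :: nat
  assumes x: "\<bar>x\<bar> < 1" and total: "c0 + c1 + c1' + c2 + c2' = 6" "1 \<le> c0"
    and re: "real c0 + x * (real c1 + real c1') + (2 * x\<^sup>2 - 1) * (real c2 + real c2') = 0"
    and im: "real c1 - real c1' + 2 * x * (real c2 - real c2') = 0"
    and balanced: "c2 = c2'"
  shows "x = 0 \<or> x = 1/2 \<or> x = -1/2"
proof -
  have "c1 = c1'" using im balanced by simp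
  with balanced have re_sym: "c0 + 2 * c1 * x + 2 * c2 * (2 * x\<^sup>2 - 1) = 0"
    and total_sym: "c0 + 2 * c1 + 2 * c2 = 6"
    using re total(1) by (simp_all add: algebra_simps)
  then have "c1 + c2 \<le> 2" using total(2) by linarith
  then consider "c1 = 0" "c2 = 0" | "c1 = 0" "c2 = 1" | "c1 = 0" "c2 = 2" | "c1 = 1" "c2 = 0"
    | "c1 = 1" "c2 = 1" | "c1 = 2" "c2 = 0"
  proof -
    have "c1 = 0 \<and> c2 = 0 \<or> c1 = 0 \<and> c2 = 1 \<or> c1 = 0 \<and> c2 = 2 \<or> c1 = 1 \<and> c2 = 0
        \<or> c1 = 1 \<and> c2 = 1 \<or> c1 = 2 \<and> c2 = 0"
      using \<open>c1 + c2 \<le> 2\<close> by arith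
    then show thesis using that by blast
  qed
  then show ?thesis
  proof cases
    case 2
    then have "4 * x\<^sup>2 + 2 = 0" using re_sym total_sym by simp
    then show ?thesis using zero_le_power2[of x] by linarith
  next
    case 3
    then have "(x - 1/2) * (x + 1/2) = 0"
      using re_sym total_sym by (simp add: power2_eq_square algebra_simps)
    then show ?thesis by auto
  next
    case 5
    then have "x * (2 * x + 1) = 0"
      using re_sym total_sym by (simp add: power2_eq_square algebra_simps)
    then show ?thesis by auto
  qed (use re_sym total_sym x in auto)
qed

lemma cos_cases_unbalanced:
  fixes x :: real and c0 c1 c1' c2 c2' :: nat
  assumes x: "\<bar>x\<bar> < 1" and total: "c0 + c1 + c1' + c2 + c2' = 6" "1 \<le> c0"
    and re: "real c0 + x * (real c1 + real c1') + (2 * x\<^sup>2 - 1) * (real c2 + real c2') = 0"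
    and im: "real c1 - real c1' + 2 * x * (real c2 - real c2') = 0"
    and unbalanced: "c2 \<noteq> c2'"
  shows "x = 0 \<or> x = 1/2 \<or> x = -1/2 \<or> x = 1/4"
proof -
  define A where "A = int c1 - int c1'"
  define B where "B = int c2 - int c2'"
  have "B \<noteq> 0" using unbalanced by (simp add: B_def)
  have xAB: "real_of_int A = - 2 * x * real_of_int B" using im by (simp add: A_def B_def)
  have "\<bar>A\<bar> < 2 * \<bar>B\<bar>"
  proof -
    have "\<bar>real_of_int A\<bar> = 2 * \<bar>x\<bar> * \<bar>real_of_int B\<bar>" using xAB by (simp add: abs_mult)
    also have "\<dots> < 2 * \<bar>real_of_int B\<bar>" using x \<open>B \<noteq> 0\<close> by simp
    finally show ?thesis by linarith
  qed
  moreover have "4 * B\<^sup>2 * c0 - 2 * A * B * (c1 + c1') + 2 * A\<^sup>2 * (c2 + c2') - 4 * B\<^sup>2 * (c2 + c2') = 0"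
  proof -
    have "real_of_int (4 * B\<^sup>2 * c0 - 2 * A * B * (c1 + c1') + 2 * A\<^sup>2 * (c2 + c2') - 4 * B\<^sup>2 * (c2 + c2'))
        = 4 * (real_of_int B)\<^sup>2 * (c0 + x * (c1 + c1') + (2 * x\<^sup>2 - 1) * (c2 + c2'))"
      using xAB by (simp add: power2_eq_square algebra_simps)
    then have "real_of_int (4 * B\<^sup>2 * c0 - 2 * A * B * (c1 + c1') + 2 * A\<^sup>2 * (c2 + c2')
        - 4 * B\<^sup>2 * (c2 + c2')) = 0"
      using re by simp
    then show ?thesis by (simp only: of_int_eq_0_iff)
  qed
  ultimately have "A = 0 \<or> A = B \<or> A = - B \<or> B = - 2 * A"
    using rational_cos_candidates[OF total] \<open>B \<noteq> 0\<close> unfolding A_def B_def by blast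
  then show ?thesis
  proof (elim disjE)
    assume "A = 0"
    then show ?thesis using xAB \<open>B \<noteq> 0\<close> by simp
  next
    assume "A = B"
    then have "real_of_int B * (2 * x + 1) = 0" using xAB by (simp add: algebra_simps)
    then show ?thesis using \<open>B \<noteq> 0\<close> by simp
  next
    assume "A = - B"
    then have "real_of_int B * (2 * x - 1) = 0" using xAB by (simp add: algebra_simps)
    then show ?thesis using \<open>B \<noteq> 0\<close> by simp
  next
    assume "B = - 2 * A"
    then have "real_of_int B * (4 * x - 1) = 0" using xAB by (simp add: algebra_simps)
    then show ?thesis using \<open>B \<noteq> 0\<close> by simp
  qed
qed

lemma cos_cases:
  fixes x :: real and c0 c1 c1' c2 c2' :: nat
  assumes x: "\<bar>x\<bar> < 1" and total: "c0 + c1 + c1' + c2 + c2' = 6" "1 \<le> c0"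
    and re: "real c0 + x * (real c1 + real c1') + (2 * x\<^sup>2 - 1) * (real c2 + real c2') = 0"
    and im: "real c1 - real c1' + 2 * x * (real c2 - real c2') = 0"
  shows "x = 0 \<or> x = 1/2 \<or> x = -1/2 \<or> x = 1/4"
  using cos_cases_balanced[OF assms] cos_cases_unbalanced[OF assms] by blast

lemma quarter_counts:
  fixes c0 c1 c1' c2 c2' :: nat
  assumes "c0 + c1 + c1' + c2 + c2' = 6" "2 * (int c1 - int c1') + (int c2 - int c2') = 0"
    "8 * c0 + 2 * (c1 + c1') = 7 * (c2 + c2')"
  shows "int c1 - int c1' + 2 * (int c2 - int c2') \<in> {3, -3}"
proof -
  have "2 * s1 + 5 * s2 = 16 \<Longrightarrow> s1 \<le> 6 \<Longrightarrow> s1 = 3 \<and> s2 = 2" for s1 s2 :: nat by presburger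
  moreover have "2 * (c1 + c1') + 5 * (c2 + c2') = 16"
    using assms(1,3) unfolding distrib_left by linarith
  moreover have "c1 + c1' \<le> 6" using assms(1) by linarith
  ultimately have "c1 + c1' = 3" "c2 + c2' = 2" by blast+
  then have "c1 = 1 \<or> c1 = 2" using assms(2) unfolding right_diff_distrib by linarith
  then show ?thesis using assms(2) \<open>c1 + c1' = 3\<close> by auto
qed

lemma orthogonal_pair_counts:
  assumes a: "cmod a = 1" "Im a \<noteq> 0" and E: "\<forall>i<6. \<forall>j<6. E i j \<in> {-1, 0, 1}"
    and orth: "exps_orthogonal 6 a E" and ij: "i < 6" "j < 6" "i \<noteq> j"
  defines "c \<equiv> diff_count E i j"
  shows "c 0 + c 1 + c (-1) + c 2 + c (-2) = 6"
    and "real (c 0) + Re a * (real (c 1) + real (c (-1)))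
      + (2 * (Re a)\<^sup>2 - 1) * (real (c 2) + real (c (-2))) = 0"
    and "real (c 1) - real (c (-1)) + 2 * Re a * (real (c 2) - real (c (-2))) = 0"
    and "(\<Sum>k<6. E i k) - (\<Sum>k<6. E j k) = int (c 1) - int (c (-1)) + 2 * (int (c 2) - int (c (-2)))"
    and "(\<Sum>k<6. E i k * E j k) \<le> int (c 0) - int (c 2) - int (c (-2))"
proof -
  have Ek: "\<forall>k<6. E i k \<in> {-1, 0, 1} \<and> E j k \<in> {-1, 0, 1}" using E ij by simp
  then have d: "\<forall>k<6. \<bar>E i k - E j k\<bar> \<le> 2" by auto
  have "(\<Sum>k<6. a powi (E i k - E j k)) = 0"
    using orth ij unfolding exps_orthogonal_def by blast
  note cos_eqs = pair_cos_equations[OF a(1) d this]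
  show "real (c 0) + Re a * (real (c 1) + real (c (-1)))
      + (2 * (Re a)\<^sup>2 - 1) * (real (c 2) + real (c (-2))) = 0"
    using cos_eqs(1) by (simp add: c_def diff_count_def)
  show "real (c 1) - real (c (-1)) + 2 * Re a * (real (c 2) - real (c (-2))) = 0"
    using cos_eqs(2) a(2) by (simp add: c_def diff_count_def)
  show "c 0 + c 1 + c (-1) + c 2 + c (-2) = 6"
    using diff_count_identities(1)[OF Ek] by (simp add: c_def)
  show "(\<Sum>k<6. E i k) - (\<Sum>k<6. E j k) = int (c 1) - int (c (-1)) + 2 * (int (c 2) - int (c (-2)))"
    using diff_count_identities(2)[OF Ek] by (simp add: c_def)
  show "(\<Sum>k<6. E i k * E j k) \<le> int (c 0) - int (c 2) - int (c (-2))"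
    using diff_count_identities(3)[OF Ek] by (simp add: c_def)
qed

lemma abs_Re_less_1:
  assumes "cmod a = 1" "Im a \<noteq> 0"
  shows "\<bar>Re a\<bar> < 1"
proof -
  have "(Re a)\<^sup>2 + (Im a)\<^sup>2 = 1" using assms(1) by (simp add: cmod_def)
  moreover have "0 < (Im a)\<^sup>2" using assms(2) by simp
  ultimately have "(Re a)\<^sup>2 < 1" by linarith
  then show ?thesis by (simp add: abs_square_less_1)
qed

lemma Re_exps_cases:
  assumes a: "cmod a = 1" "Im a \<noteq> 0" and E: "\<forall>i<6. \<forall>j<6. E i j \<in> {-1, 0, 1}"
    and orth: "exps_orthogonal 6 a E"
  shows "Re a = 0 \<or> Re a = 1/2 \<or> Re a = -1/2 \<or> Re a = 1/4"
proof -
  have "E i 0 \<in> {-1, 0, 1}" if "i < 4" for i using E that by simp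
  then have "(\<lambda>i. E i 0) ` {..<4} \<subseteq> {-1, 0, 1}" by blast
  then have "card ((\<lambda>i. E i 0) ` {..<4}) \<le> card {-1, 0, 1::int}" by (rule card_mono[rotated]) simp
  then have "\<not> inj_on (\<lambda>i. E i 0) {..<4}" by (intro pigeonhole) simp
  then obtain i j where ij: "i < 4" "j < 4" "i \<noteq> j" "E i 0 = E j 0"
    unfolding inj_on_def by auto
  have "E i 0 - E j 0 \<in> set (map (\<lambda>k. E i k - E j k) [0..<6])" by simp
  then have "diff_count E i j 0 \<noteq> 0"
    using ij(4) unfolding diff_count_def count_list_0_iff by simp
  then have c0: "1 \<le> diff_count E i j 0" by simp
  have "i < 6" "j < 6" using ij by simp_all
  note pair = orthogonal_pair_counts[OF a E orth this ij(3)]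
  show ?thesis by (rule cos_cases[OF abs_Re_less_1[OF a] pair(1) c0 pair(2,3)])
qed

lemma Re_exps_ne_quarter:
  assumes a: "cmod a = 1" "Im a \<noteq> 0" and E: "\<forall>i<6. \<forall>j<6. E i j \<in> {-1, 0, 1}"
    and orth: "exps_orthogonal 6 a E"
  shows "Re a \<noteq> 1/4"
proof
  assume x: "Re a = 1/4"
  define s where "s i = (\<Sum>k<6. E i k)" for i
  have "s i - s j \<in> {3, -3}" if "i < 6" "j < 6" "i \<noteq> j" for i j
  proof -
    note pair = orthogonal_pair_counts[OF a E orth that]
    let ?c = "diff_count E i j"
    have "real (8 * ?c 0 + 2 * (?c 1 + ?c (-1))) = real (7 * (?c 2 + ?c (-2)))"
      using pair(2) x by (simp add: power2_eq_square algebra_simps)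
    then have re: "8 * ?c 0 + 2 * (?c 1 + ?c (-1)) = 7 * (?c 2 + ?c (-2))"
      by (simp only: of_nat_eq_iff)
    have "real_of_int (2 * (int (?c 1) - int (?c (-1))) + (int (?c 2) - int (?c (-2)))) = 0"
      using pair(3) x by (simp add: algebra_simps)
    then have im: "2 * (int (?c 1) - int (?c (-1))) + (int (?c 2) - int (?c (-2))) = 0"
      by (simp only: of_int_eq_0_iff)
    show ?thesis using quarter_counts[OF pair(1) im re] pair(4) by (simp add: s_def)
  qed
  from this[of 0 1] this[of 1 2] this[of 0 2] show False by auto
qed

lemma Re_exps_ne_half:
  assumes a: "cmod a = 1" "Im a \<noteq> 0" and E: "\<forall>i<6. \<forall>j<6. E i j \<in> {-1, 0, 1}"
    and orth: "exps_orthogonal 6 a E"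
  shows "Re a \<noteq> 1/2"
proof
  assume x: "Re a = 1/2"
  \<comment> \<open>Then every off-diagonal Gram entry is at most -2, and the Gram sum would be negative.\<close>
  have "(\<Sum>k<6. E i k * E j k) \<le> (if i = j then 6 else -2)" if "i < 6" "j < 6" for i j
  proof (cases "i = j")
    case True
    have "E i k * E i k \<le> 1" if "k < 6" for k
    proof -
      have "E i k \<in> {-1, 0, 1}" using E \<open>i < 6\<close> that by simp
      then show ?thesis by auto
    qed
    then have "(\<Sum>k<6. E i k * E i k) \<le> (\<Sum>k<(6::nat). 1)"
      by (intro sum_mono) simp
    then show ?thesis using True by simp
  next
    case False
    note pair = orthogonal_pair_counts[OF a E orth that False]
    let ?c = "diff_count E i j"
    have "real (2 * ?c 0 + (?c 1 + ?c (-1))) = real (?c 2 + ?c (-2))"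
      using pair(2) x by (simp add: power2_eq_square algebra_simps)
    then have "2 * ?c 0 + (?c 1 + ?c (-1)) = ?c 2 + ?c (-2)" by (simp only: of_nat_eq_iff)
    then have "int (?c 0) - int (?c 2) - int (?c (-2)) \<le> -2" using pair(1) by linarith
    then show ?thesis using pair(5) False by simp
  qed
  then have "(\<Sum>i<6. \<Sum>j<6. \<Sum>k<6. E i k * E j k) \<le> (\<Sum>i<6::nat. \<Sum>j<6::nat. if i = j then 6 else -2)"
    by (intro sum_mono) simp
  also have "\<dots> = -24" by (simp add: all_less_6 numeral_eq_Suc)
  finally show False using sum_gram_nonneg[of E 6 6] by simp
qed

lemma unimodular_Re_eq:
  assumes "cmod a = 1" "cmod b = 1" "Re a = Re b"
  shows "a = b \<or> a = cnj b"
proof -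
  have "(Im a)\<^sup>2 = (Im b)\<^sup>2" using assms by (simp add: cmod_def)
  then have "Im a = Im b \<or> Im a = - Im b" by (simp add: power2_eq_iff)
  then show ?thesis using assms(3) by (auto simp: complex_eq_iff)
qed

lemma exps_of_conj_base:
  assumes g: "cmod g = 1" and a: "a = g \<or> a = cnj g" and H: "\<forall>i<n. \<forall>j<n. H i j = a powi E i j"
  obtains X where "\<forall>i<n. \<forall>j<n. H i j = g powi X i j"
proof
  have "cnj g powi e = g powi (- e)" for e
    using cnj_power_int_unimodular[OF g, of e] by simp
  then show "\<forall>i<n. \<forall>j<n. H i j = g powi (if a = g then E i j else - E i j)"
    using a H by auto
qed

lemma CHM_6_entries_nonreal:
  assumes a: "cmod a = 1" and C: "is_CHM 6 H" and H: "\<forall>i<6. \<forall>j<6. H i j \<in> {1, a, cnj a}"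
  shows "Im a \<noteq> 0"
proof
  assume "Im a = 0"
  moreover have "\<bar>Re a\<bar> = 1" using a calculation by (simp add: cmod_def)
  ultimately have "a = 1 \<or> a = -1" by (auto simp: abs_if complex_eq_iff split: if_splits)
  then have pm: "H i j = 1 \<or> H i j = -1" if "i < 6" "j < 6" for i j
    using H[rule_format, OF that] by auto
  have "4 dvd (6::nat)" by (rule real_CHM_order_dvd_4[OF C]) (simp_all add: pm)
  then show False by simp
qed

lemma Re_of_CHM_exps:
  assumes a: "cmod a = 1" "Im a \<noteq> 0" and E: "\<forall>i<6. \<forall>j<6. E i j \<in> {-1, 0, 1}"
    and orth: "exps_orthogonal 6 a E"
  shows "Re a = 0 \<or> Re a = -1/2"
  using Re_exps_cases[OF assms] Re_exps_ne_quarter[OF assms] Re_exps_ne_half[OF assms] by auto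

theorem mainTheorem8:
  fixes a :: complex and H :: "nat \<Rightarrow> nat \<Rightarrow> complex"
  assumes "cmod a = 1"
    and "is_CHM 6 H"
    and "\<forall>i<6. \<forall>j<6. H i j \<in> {1, a, cnj a}"
  shows "complex_equiv 6 H S6_0 \<or> complex_equiv 6 H H1"
proof -
  obtain E where E: "\<forall>i<6. \<forall>j<6. E i j \<in> {-1, 0, 1} \<and> H i j = a powi E i j"
    using exps_of_entries[OF assms(1,3)] .
  then have H_exps: "\<forall>i<6. \<forall>j<6. H i j = a powi E i j" by simp
  have "Re a = 0 \<or> Re a = -1/2"
    using Re_of_CHM_exps[OF assms(1) CHM_6_entries_nonreal[OF assms] _
      exps_orthogonal_of_CHM[OF assms(2,1) H_exps]] E by simp
  then show ?thesis
  proof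
    assume "Re a = 0"
    moreover have norm_i: "cmod \<i> = 1" by simp
    ultimately have "a = \<i> \<or> a = cnj \<i>" by (intro unimodular_Re_eq[OF assms(1)]) simp_all
    then obtain X where "\<forall>i<6. \<forall>j<6. H i j = \<i> powi X i j"
      by (rule exps_of_conj_base[OF norm_i _ H_exps])
    then show ?thesis using complex_equiv_H1[OF assms(2)] by blast
  next
    assume "Re a = -1/2"
    then have "a = omega3 \<or> a = cnj omega3"
      by (intro unimodular_Re_eq[OF assms(1) norm_omega3]) (simp add: omega3_eq)
    then obtain X where "\<forall>i<6. \<forall>j<6. H i j = omega3 powi X i j"
      by (rule exps_of_conj_base[OF norm_omega3 _ H_exps])
    then show ?thesis using complex_equiv_S6_0[OF assms(2)] by blast
  qed
qed

end
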